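(* Let $\mathcal{X}$ be a tape category with generating object $X$, and let $T$ be a finite-state deterministic transducer with input category $\mathcal{X}$, structure functor $F$, primary input signature $X\to X$ and (output) state space $S(F(X))$, and no auxiliary inputs or output signatures. Fix a finite set of morphisms $g_1,\dots,g_n:X\to X$ in the freely-generated $\mathbb{N}^2$-filtered category over $\mathcal{X}$ with a single generating signature $X\to X$ of degree $x$, such that the generator appears at most once in each $g_i$ (i.e. the linear coefficient of $\deg g_i$ is at most $1$). Suppose a morphism $g:X\to X$ is constructed by starting with $g=\mathrm{id}_X$ and performing finitely many steps, each of which replaces $g$ by some $g_i$ with $g$ substituted for the generator. Then, for a given starting state, the state $S(F(g))$ reached can be computed, processing the construction steps one at a time, using an amount of memory that is $O(1)$ in the degree of $g$.
   Context: A filtered-morphism category is a locally small symmetric monoidal (copy-discard) category in which every morphism $f$ has a degree $\deg(f)\in\mathbb{N}$, identities have degree $0$, and $\deg(g\circ f)\le\deg(g)+\deg(f)$. A tape category is a filtered-morphism copy-discard category freely generated over a single object $X$ and finitely many morphisms of the form $X^m\to X^n$ (superscripts denote monoidal powers), each generator having positive degree. Given a filtered-morphism category $\mathcal{C}$ and a signature $X\to X$ of degree $x$, the freely-generated $\mathbb{N}^2$-filtered category over $\mathcal{C}$ with that generator consists of morphisms built by composing/tensoring $\mathcal{C}$-morphisms with a free generator $X\to X$, with degree a linear polynomial whose linear coefficient counts occurrences of the generator and whose constant term is the sum of degrees of the $\mathcal{C}$-parts. The filtered state category $\mathcal{D}^S$ of a filtered-morphism category $\mathcal{D}$: objects $A$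 are sets $S(A)$ with, for each state, a finite list of variables (pairs of $\mathcal{D}$-objects with degrees $ax+b$); a morphism $f:A\to B$ is a function $S(f):S(A)\to S(B)$ with output functions assigning to each variable at $S(f)(s)$ a morphism in the free category over $\mathcal{D}$ generated by the variables at $s$, with degree constraints; the monoidal product multiplies state spaces and concatenates variable lists. A filtered deterministic transducer with input category $\mathcal{C}$, output category $\mathcal{D}$ and primary input signature $X\to Y$ has a strong monoidal functor $F:\mathcal{C}\to\mathcal{D}^S$ with $\deg F(\alpha)\le\deg\alpha$; on primary input $\alpha$ and input state $s\in S(F(X))$ it moves to the state $S(F(\alpha))(s)$. It is a finite-state deterministic transducer if $S(F(Z))$ is finite for every object $Z$ of the input category. *)

theory Defs
  imports Main
begin

text \<open>Syntax of morphisms of a tape category (free copy-discard category over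
one object X and generators 'g with arities X^m -> X^n), extended by one
extra generator Hole : X -> X (the free generating signature of the
N^2-filtered category over the tape category).\<close>

datatype 'g tm =
    Gen 'g
  | Hole
  | Idn nat
  | Comp "'g tm" "'g tm"   \<comment> \<open>Comp t u = t after u\<close>
  | Tens "'g tm" "'g tm"
  | Swap
  | Copy
  | Del

inductive typed :: "('g \<Rightarrow> nat \<times> nat) \<Rightarrow> 'g tm \<Rightarrow> nat \<Rightarrow> nat \<Rightarrow> bool"
  for ar where
  "typed ar (Gen a) (fst (ar a)) (snd (ar a))"
| "typed ar Hole 1 1"
| "typed ar (Idn n) n n"
| "typed ar u l m \<Longrightarrow> typed ar t m n \<Longrightarrow> typed ar (Comp t u) l n"
| "typed ar t m n \<Longrightarrow> typed ar u m' n' \<Longrightarrow> typed ar (Tens t u) (m + m') (n + n')"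
| "typed ar Swap 2 2"
| "typed ar Copy 1 2"
| "typed ar Del 1 0"

text \<open>Domain arity, computed syntactically (needed to split tensor inputs).\<close>
primrec dom_ar :: "('g \<Rightarrow> nat \<times> nat) \<Rightarrow> 'g tm \<Rightarrow> nat" where
  "dom_ar ar (Gen a) = fst (ar a)"
| "dom_ar ar Hole = 1"
| "dom_ar ar (Idn n) = n"
| "dom_ar ar (Comp t u) = dom_ar ar u"
| "dom_ar ar (Tens t u) = dom_ar ar t + dom_ar ar u"
| "dom_ar ar Swap = 2"
| "dom_ar ar Copy = 1"
| "dom_ar ar Del = 1"

primrec gens :: "'g tm \<Rightarrow> 'g set" where
  "gens (Gen a) = {a}"
| "gens Hole = {}"
| "gens (Idn n) = {}"
| "gens (Comp t u) = gens t \<union> gens u"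
| "gens (Tens t u) = gens t \<union> gens u"
| "gens Swap = {}"
| "gens Copy = {}"
| "gens Del = {}"

text \<open>Number of occurrences of the free generator (the linear coefficient
of the N^2-degree).\<close>
primrec holes :: "'g tm \<Rightarrow> nat" where
  "holes (Gen a) = 0"
| "holes Hole = 1"
| "holes (Idn n) = 0"
| "holes (Comp t u) = holes t + holes u"
| "holes (Tens t u) = holes t + holes u"
| "holes Swap = 0"
| "holes Copy = 0"
| "holes Del = 0"

primrec subst :: "'g tm \<Rightarrow> 'g tm \<Rightarrow> 'g tm" where
  "subst (Gen a) g = Gen a"
| "subst Hole g = g"
| "subst (Idn n) g = Idn n"
| "subst (Comp t u) g = Comp (subst t g) (subst u g)"
| "subst (Tens t u) g = Tens (subst t g) (subst u g)"
| "subst Swap g = Swap"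
| "subst Copy g = Copy"
| "subst Del g = Del"

definition construct :: "'g tm list \<Rightarrow> nat list \<Rightarrow> 'g tm" where
  "construct gs steps = foldl (\<lambda>g i. subst (gs ! i) g) (Idn 1) steps"

text \<open>State component S(F(-)) of the structure functor of a transducer.
With Q = S(F(X)), strong monoidality identifies S(F(X^m)) with Q^m
(lists of length m); F is then determined compositionally by the state maps
of the generators and of the structural morphisms.  The hole parameter h
interprets the free generator (irrelevant for hole-free terms).\<close>
primrec sem ::
  "('g \<Rightarrow> nat \<times> nat) \<Rightarrow> ('g \<Rightarrow> 'q list \<Rightarrow> 'q list) \<Rightarrow> ('q list \<Rightarrow> 'q list)
   \<Rightarrow> ('q list \<Rightarrow> 'q list) \<Rightarrow> ('q list \<Rightarrow> 'q list) \<Rightarrow> ('q list \<Rightarrow> 'q list)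
   \<Rightarrow> 'g tm \<Rightarrow> 'q list \<Rightarrow> 'q list" where
  "sem ar fg fsw fcp fdl h (Gen a) = fg a"
| "sem ar fg fsw fcp fdl h Hole = h"
| "sem ar fg fsw fcp fdl h (Idn n) = id"
| "sem ar fg fsw fcp fdl h (Comp t u) =
     sem ar fg fsw fcp fdl h t \<circ> sem ar fg fsw fcp fdl h u"
| "sem ar fg fsw fcp fdl h (Tens t u) =
     (\<lambda>xs. sem ar fg fsw fcp fdl h t (take (dom_ar ar t) xs)
           @ sem ar fg fsw fcp fdl h u (drop (dom_ar ar t) xs))"
| "sem ar fg fsw fcp fdl h Swap = fsw"
| "sem ar fg fsw fcp fdl h Copy = fcp"
| "sem ar fg fsw fcp fdl h Del = fdl"

end

theory Submission
  imports Defs "HOL-Library.Cardinality"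
begin

text \<open>Since the generator X \<rightarrow> X is interpreted on single states, the transducer
turns every morphism g : X \<rightarrow> X into a state map Q \<rightarrow> Q, where Q = S(F(X)) is finite.
Substitution is compositional: the state map of a step g_i with g plugged in depends
only on the state map of g.  Processing the construction steps therefore only requires
remembering the start state and the current state map, an element of the finite
set Q \<times> (Q \<rightarrow> Q).\<close>

lemma typed_dom_ar: "typed ar t m n \<Longrightarrow> dom_ar ar t = m"
  by (induction rule: typed.induct) auto

lemma typed_subst: "typed ar t m n \<Longrightarrow> typed ar g 1 1 \<Longrightarrow> typed ar (subst t g) m n"
  by (induction rule: typed.induct) (simp_all add: typed.intros typed.intros[simplified])

lemma gens_subst: "gens (subst t g) \<subseteq> gens t \<union> gens g"
  by (induction t) auto

lemma sem_subst:
  assumes "typed ar t m n" and "typed ar g 1 1"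
  shows "sem ar fg fsw fcp fdl h (subst t g) = sem ar fg fsw fcp fdl (sem ar fg fsw fcp fdl h g) t"
  using assms
proof (induction rule: typed.induct)
  case (5 t m n u m' n')
  then have "dom_ar ar (subst t g) = dom_ar ar t"
    by (metis typed_dom_ar typed_subst)
  with 5 show ?case by simp
qed auto

lemma construct_Nil: "construct gs [] = Idn 1"
  by (simp add: construct_def)

lemma construct_snoc: "construct gs (steps @ [i]) = subst (gs ! i) (construct gs steps)"
  by (simp add: construct_def)

lemma typed_construct:
  assumes "\<forall>t \<in> set gs. typed ar t 1 1 \<and> gens t \<subseteq> Sig"
    and "set steps \<subseteq> {..<length gs}"
  shows "typed ar (construct gs steps) 1 1 \<and> gens (construct gs steps) \<subseteq> Sig"
  using assms(2)
proof (induction steps rule: rev_induct)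
  case Nil
  show ?case by (simp add: construct_Nil typed.intros)
next
  case (snoc i steps)
  then have "gs ! i \<in> set gs" by simp
  with assms(1) snoc show ?case
    using gens_subst[of "gs ! i" "construct gs steps"]
    by (fastforce simp: construct_snoc typed_subst)
qed

locale tape_transducer =
  fixes Sig :: "'g set"
    and ar :: "'g \<Rightarrow> nat \<times> nat"
    and fg :: "'g \<Rightarrow> 'q list \<Rightarrow> 'q list"
    and fsw fcp fdl :: "'q list \<Rightarrow> 'q list"
  assumes length_fg: "\<And>a xs. a \<in> Sig \<Longrightarrow> length xs = fst (ar a) \<Longrightarrow> length (fg a xs) = snd (ar a)"
    and length_fsw: "\<And>xs. length xs = 2 \<Longrightarrow> length (fsw xs) = 2"
    and length_fcp: "\<And>xs. length xs = 1 \<Longrightarrow> length (fcp xs) = 2"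
    and length_fdl: "\<And>xs. length xs = 1 \<Longrightarrow> length (fdl xs) = 0"
begin

abbreviation S :: "('q list \<Rightarrow> 'q list) \<Rightarrow> 'g tm \<Rightarrow> 'q list \<Rightarrow> 'q list" where
  "S \<equiv> sem ar fg fsw fcp fdl"

definition preserves_singletons :: "('q list \<Rightarrow> 'q list) \<Rightarrow> bool" where
  "preserves_singletons h \<longleftrightarrow> (\<forall>ys. length ys = 1 \<longrightarrow> length (h ys) = 1)"

lemma length_sem:
  assumes "typed ar t m n" and "gens t \<subseteq> Sig" and "preserves_singletons h" and "length xs = m"
  shows "length (S h t xs) = n"
  using assms
proof (induction arbitrary: xs rule: typed.induct)
  case (5 t m n u m' n')
  then show ?case by (simp add: typed_dom_ar)
qed (auto simp: preserves_singletons_def length_fg length_fsw length_fcp length_fdl)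

lemma sem_cong_on_singletons:
  assumes "typed ar t m n" and "gens t \<subseteq> Sig" and "preserves_singletons h"
    and "\<And>ys. length ys = 1 \<Longrightarrow> h ys = h' ys" and "length xs = m"
  shows "S h t xs = S h' t xs"
  using assms
proof (induction arbitrary: xs rule: typed.induct)
  case (4 u l m t n)
  have u_eq: "S h u xs = S h' u xs"
    using 4 by simp
  have "length (S h u xs) = m"
    using "4.hyps"(1) "4.prems" by (auto intro: length_sem)
  with 4 u_eq show ?case by simp
next
  case (5 t m n u m' n')
  then show ?case by (simp add: typed_dom_ar)
qed simp_all

definition state_map :: "('q \<Rightarrow> 'q) \<Rightarrow> 'g tm \<Rightarrow> 'q \<Rightarrow> 'q" where
  "state_map f t q = hd (S (\<lambda>ys. [f (hd ys)]) t [q])"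

lemma sem_singleton:
  assumes "typed ar t 1 1" and "gens t \<subseteq> Sig"
  shows "S (\<lambda>ys. [f (hd ys)]) t [q] = [state_map f t q]"
proof -
  have "length (S (\<lambda>ys. [f (hd ys)]) t [q]) = 1"
    using assms by (intro length_sem) (auto simp: preserves_singletons_def)
  then show ?thesis
    unfolding state_map_def by (cases "S (\<lambda>ys. [f (hd ys)]) t [q]") auto
qed

lemma state_map_subst:
  assumes "typed ar t 1 1" and "gens t \<subseteq> Sig" and "typed ar g 1 1" and "gens g \<subseteq> Sig"
  shows "state_map f (subst t g) = state_map (state_map f g) t"
proof
  fix q
  have sem_g: "S (\<lambda>ys. [f (hd ys)]) g ys = [state_map f g (hd ys)]" if "length ys = 1" for ys
    using that sem_singleton[OF assms(3,4)] by (cases ys) auto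
  have "S (\<lambda>ys. [f (hd ys)]) (subst t g) [q] = S (S (\<lambda>ys. [f (hd ys)]) g) t [q]"
    using assms by (simp add: sem_subst)
  also have "\<dots> = S (\<lambda>ys. [state_map f g (hd ys)]) t [q]"
    using assms(1,2) sem_g by (intro sem_cong_on_singletons) (auto simp: preserves_singletons_def)
  finally show "state_map f (subst t g) q = state_map (state_map f g) t q"
    unfolding state_map_def by simp
qed

lemma state_map_construct:
  assumes "\<forall>t \<in> set gs. typed ar t 1 1 \<and> gens t \<subseteq> Sig"
    and "set steps \<subseteq> {..<length gs}"
  shows "state_map f (construct gs steps) = foldl (\<lambda>\<phi> i. state_map \<phi> (gs ! i)) id steps"
  using assms(2)
proof (induction steps rule: rev_induct)
  case Nil
  show ?case by (simp add: construct_Nil state_map_def fun_eq_iff)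
next
  case (snoc i steps)
  then have "gs ! i \<in> set gs" by simp
  moreover have "typed ar (construct gs steps) 1 1 \<and> gens (construct gs steps) \<subseteq> Sig"
    using typed_construct[OF assms(1)] snoc by simp
  ultimately show ?case
    using assms(1) snoc by (simp add: construct_snoc state_map_subst)
qed

lemma sem_construct:
  assumes "\<forall>t \<in> set gs. typed ar t 1 1 \<and> gens t \<subseteq> Sig"
    and "set steps \<subseteq> {..<length gs}"
  shows "S id (construct gs steps) [s] = [foldl (\<lambda>\<phi> i. state_map \<phi> (gs ! i)) id steps s]"
proof -
  have "S id (construct gs steps) [s] = S (\<lambda>ys. [id (hd ys)]) (construct gs steps) [s]"
    using typed_construct[OF assms]
    by (intro sem_cong_on_singletons) (auto simp: preserves_singletons_def length_Suc_conv)
  also have "\<dots> = [state_map id (construct gs steps) s]"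
    using typed_construct[OF assms] by (intro sem_singleton) auto
  finally show ?thesis
    using state_map_construct[OF assms] by simp
qed

end

lemma finite_memory_to_nat:
  fixes init :: "'s \<Rightarrow> 'm" and step :: "'m \<Rightarrow> 'i \<Rightarrow> 'm" and out :: "'m \<Rightarrow> 'o"
  assumes "finite (UNIV :: 'm set)"
  shows "\<exists>(M :: nat set) init' step' out'. finite M \<and> (\<forall>s. init' s \<in> M) \<and>
           (\<forall>m \<in> M. \<forall>i. step' m i \<in> M) \<and>
           (\<forall>steps s. out' (foldl step' (init' s) steps) = out (foldl step (init s) steps))"
proof -
  obtain enc :: "'m \<Rightarrow> nat" where "inj enc"
    using finite_imp_inj_to_nat_seg[OF assms] by blast
  then have decode: "inv enc (enc m) = m" for m
    by simp
  define step' where "step' n i = enc (step (inv enc n) i)" for n i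
  have "foldl step' (enc m) steps = enc (foldl step m steps)" for m steps
    by (induction steps arbitrary: m) (simp_all add: step'_def decode)
  then show ?thesis
    using assms
    by (intro exI[of _ "range enc"] exI[of _ "enc \<circ> init"] exI[of _ step']
        exI[of _ "out \<circ> inv enc"]) (simp add: step'_def decode)
qed

theorem lemma3p19:
  fixes Sig :: "'g set"
    and ar :: "'g \<Rightarrow> nat \<times> nat"
    and fg :: "'g \<Rightarrow> 'q list \<Rightarrow> 'q list"
    and fsw fcp fdl :: "'q list \<Rightarrow> 'q list"
    and gs :: "'g tm list"
  assumes "finite Sig"
    and "finite (UNIV :: 'q set)"
    and "\<forall>a \<in> Sig. \<forall>xs. length xs = fst (ar a) \<longrightarrow> length (fg a xs) = snd (ar a)"
    and "\<forall>xs. length xs = 2 \<longrightarrow> length (fsw xs) = 2"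
    and "\<forall>xs. length xs = 1 \<longrightarrow> length (fcp xs) = 2"
    and "\<forall>xs. length xs = 1 \<longrightarrow> length (fdl xs) = 0"
    and "\<forall>i < length gs. typed ar (gs ! i) 1 1 \<and> gens (gs ! i) \<subseteq> Sig \<and> holes (gs ! i) \<le> 1"
  shows "\<exists>(M :: nat set) (init :: 'q \<Rightarrow> nat) (step :: nat \<Rightarrow> nat \<Rightarrow> nat) (out :: nat \<Rightarrow> 'q list).
           finite M \<and> (\<forall>s. init s \<in> M) \<and>
           (\<forall>m \<in> M. \<forall>i < length gs. step m i \<in> M) \<and>
           (\<forall>steps s. set steps \<subseteq> {..<length gs} \<longrightarrow>
              out (foldl step (init s) steps)
                = sem ar fg fsw fcp fdl id (construct gs steps) [s])"
proof -
  interpret tape_transducer Sig ar fg fsw fcp fdl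
    using assms(3-6) by unfold_locales auto
  have gs: "\<forall>t \<in> set gs. typed ar t 1 1 \<and> gens t \<subseteq> Sig"
    using assms(7) by (fastforce simp: in_set_conv_nth)
  have finite_memory: "finite (UNIV :: ('q \<times> ('q \<Rightarrow> 'q)) set)"
    using assms(2) by (simp add: finite_UNIV_fun finite_Prod_UNIV)
  define remember :: "'q \<times> ('q \<Rightarrow> 'q) \<Rightarrow> nat \<Rightarrow> 'q \<times> ('q \<Rightarrow> 'q)" where
    "remember = (\<lambda>(s, \<phi>) i. (s, state_map \<phi> (gs ! i)))"
  from finite_memory_to_nat[OF finite_memory, where init = "\<lambda>s. (s, id)" and step = remember
      and out = "\<lambda>(s, \<phi>). [\<phi> s]"]
  obtain M init and step :: "nat \<Rightarrow> nat \<Rightarrow> nat" and out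
    where M: "finite M" "\<forall>s. init s \<in> M" "\<forall>m \<in> M. \<forall>i. step m i \<in> M"
      and simulates: "\<And>steps s. out (foldl step (init s) steps)
        = (\<lambda>(s, \<phi>). [\<phi> s]) (foldl remember (s, id) steps)"
    by blast
  have remember_foldl: "foldl remember (s, \<psi>) steps
      = (s, foldl (\<lambda>\<phi> i. state_map \<phi> (gs ! i)) \<psi> steps)" for s \<psi> steps
    by (induction steps arbitrary: \<psi>) (simp_all add: remember_def)
  show ?thesis
  proof (intro exI conjI allI impI)
    fix steps s
    assume "set steps \<subseteq> {..<length gs}"
    then show "out (foldl step (init s) steps) = sem ar fg fsw fcp fdl id (construct gs steps) [s]"
      by (simp add: simulates remember_foldl sem_construct[OF gs])
  qed (use M in auto)
qed

end
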